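(* Let $\alpha\in(0,1)$ and let $n\ge r\ge 1$ be integers. If $P\in\mathbb{P}_\alpha^{n\times n}$, then for every matrix $M\in\mathbb{R}^{n\times r}$ with $\operatorname{rank}(M)=r$ one has $M^{\mathrm T}PM\in\mathbb{P}_\alpha^{r\times r}$.
   Context: For $\alpha\in(0,1)$ and a positive integer $k$, the set of $k$-dimensional fractional order positive definite matrices is $\mathbb{P}_\alpha^{k\times k}=\Big\{\sin\big(\tfrac{\alpha\pi}{2}\big)X+\cos\big(\tfrac{\alpha\pi}{2}\big)Y:\ X,Y\in\mathbb{R}^{k\times k},\ \begin{bmatrix}X&Y\\-Y&X\end{bmatrix}>0\Big\}$, where "$>0$" means the (symmetric) block matrix is positive definite. *)

theory Defs
  imports "HOL-Analysis.Analysis"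
begin

definition pos_def :: "real^'k^'k \<Rightarrow> bool" where
  "pos_def A \<longleftrightarrow> transpose A = A \<and> (\<forall>x. x \<noteq> 0 \<longrightarrow> x \<bullet> (A *v x) > 0)"

definition block_XY :: "real^'k^'k \<Rightarrow> real^'k^'k \<Rightarrow> real^('k + 'k)^('k + 'k)" where
  "block_XY X Y = (\<chi> i j. case (i, j) of
      (Inl a, Inl b) \<Rightarrow> X $ a $ b
    | (Inl a, Inr b) \<Rightarrow> Y $ a $ b
    | (Inr a, Inl b) \<Rightarrow> - (Y $ a $ b)
    | (Inr a, Inr b) \<Rightarrow> X $ a $ b)"

definition frac_pd :: "real \<Rightarrow> (real^'k^'k) set" where
  "frac_pd \<alpha> = {sin (\<alpha> * pi / 2) *\<^sub>R X + cos (\<alpha> * pi / 2) *\<^sub>R Y | X Y.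
       pos_def (block_XY X Y)}"

end

theory Submission
  imports Defs
begin

text \<open>The proof: if \<open>P = sin(\<alpha>\<pi>/2) X + cos(\<alpha>\<pi>/2) Y\<close> with \<open>[X Y; -Y X] > 0\<close>, then
  \<open>M\<^sup>T P M = sin(\<alpha>\<pi>/2) M\<^sup>T X M + cos(\<alpha>\<pi>/2) M\<^sup>T Y M\<close>, and the block matrix built from
  \<open>M\<^sup>T X M\<close> and \<open>M\<^sup>T Y M\<close> is the congruence \<open>D\<^sup>T [X Y; -Y X] D\<close> with \<open>D = diag(M, M)\<close>.
  Full column rank of \<open>M\<close> makes \<open>D\<close> injective, and congruence by an injective matrix
  preserves positive definiteness.\<close>

lemma sum_UNIV_Plus:
  "sum g (UNIV :: ('a::finite + 'b::finite) set) = (\<Sum>a\<in>UNIV. g (Inl a)) + (\<Sum>b\<in>UNIV. g (Inr b))"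
  by (subst UNIV_Plus_UNIV[symmetric], subst sum.Plus) (auto simp: o_def)

lemma matrix_add_rdistrib: "(A + B) ** C = A ** C + B ** (C::real^_^_)"
  by (vector matrix_matrix_mult_def sum.distrib[symmetric] field_simps)

lemma quadratic_form_congruence:
  fixes A :: "real^'m^'m" and D :: "real^'k^'m"
  shows "x \<bullet> ((transpose D ** A ** D) *v x) = (D *v x) \<bullet> (A *v (D *v x))"
proof -
  have "x \<bullet> ((transpose D ** A ** D) *v x) = ((A *v (D *v x)) v* D) \<bullet> x"
    by (simp add: matrix_vector_mul_assoc[symmetric] matrix_mul_assoc inner_commute)
  also have "\<dots> = (D *v x) \<bullet> (A *v (D *v x))"
    by (metis dot_lmul_matrix inner_commute)
  finally show ?thesis .
qed

lemma pos_def_congruence: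
  fixes A :: "real^'m^'m" and D :: "real^'k^'m"
  assumes "pos_def A" and "inj ((*v) D)"
  shows "pos_def (transpose D ** A ** D)"
  unfolding pos_def_def
proof (intro conjI allI impI)
  show "transpose (transpose D ** A ** D) = transpose D ** A ** D"
    using assms(1) by (simp add: pos_def_def matrix_transpose_mul matrix_mul_assoc)
next
  fix x :: "real^'k"
  assume "x \<noteq> 0"
  then have "D *v x \<noteq> 0"
    using assms(2) by (metis inj_eq matrix_vector_mult_0_right)
  then show "x \<bullet> ((transpose D ** A ** D) *v x) > 0"
    using assms(1) by (simp add: quadratic_form_congruence pos_def_def)
qed

definition block_diag :: "real^'r^'n \<Rightarrow> real^('r + 'r)^('n + 'n)" where
  "block_diag M = (\<chi> i j. case (i, j) of
      (Inl a, Inl b) \<Rightarrow> M $ a $ b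
    | (Inr a, Inr b) \<Rightarrow> M $ a $ b
    | _ \<Rightarrow> 0)"

lemma block_XY_congruence:
  fixes M :: "real^'r^'n"
  shows "block_XY (transpose M ** X ** M) (transpose M ** Y ** M)
       = transpose (block_diag M) ** block_XY X Y ** block_diag M"
  unfolding vec_eq_iff
proof (intro allI)
  fix i j :: "'r + 'r"
  show "block_XY (transpose M ** X ** M) (transpose M ** Y ** M) $ i $ j
      = (transpose (block_diag M) ** block_XY X Y ** block_diag M) $ i $ j"
    by (cases i; cases j)
      (simp_all add: block_XY_def block_diag_def matrix_matrix_mult_def transpose_def
        sum_UNIV_Plus sum_negf)
qed

lemma block_diag_mult_vector:
  fixes M :: "real^'r^'n"
  shows "(block_diag M *v z) $ Inl a = (M *v (\<chi> b. z $ Inl b)) $ a"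
    and "(block_diag M *v z) $ Inr a = (M *v (\<chi> b. z $ Inr b)) $ a"
  by (simp_all add: block_diag_def matrix_vector_mult_def sum_UNIV_Plus)

lemma inj_block_diag:
  fixes M :: "real^'r^'n"
  assumes "inj ((*v) M)"
  shows "inj ((*v) (block_diag M))"
proof (rule injI)
  fix z w :: "real^('r + 'r)"
  assume "block_diag M *v z = block_diag M *v w"
  then have "M *v (\<chi> b. z $ Inl b) = M *v (\<chi> b. w $ Inl b)"
    and "M *v (\<chi> b. z $ Inr b) = M *v (\<chi> b. w $ Inr b)"
    by (metis vec_eq_iff block_diag_mult_vector)+
  then have "(\<chi> b. z $ Inl b) = (\<chi> b. w $ Inl b)" and "(\<chi> b. z $ Inr b) = (\<chi> b. w $ Inr b)"
    using assms by (auto dest: injD)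
  then show "z = w"
    unfolding vec_eq_iff by (metis sumE vec_lambda_beta)
qed

lemma frac_pd_congruence:
  fixes P :: "real^'n^'n" and M :: "real^'r^'n"
  assumes "P \<in> frac_pd \<alpha>" and "inj ((*v) M)"
  shows "transpose M ** P ** M \<in> frac_pd \<alpha>"
proof -
  obtain X Y where P: "P = sin (\<alpha> * pi / 2) *\<^sub>R X + cos (\<alpha> * pi / 2) *\<^sub>R Y"
    and pd: "pos_def (block_XY X Y)"
    using assms(1) unfolding frac_pd_def by blast
  have "transpose M ** P ** M
      = sin (\<alpha> * pi / 2) *\<^sub>R (transpose M ** X ** M) + cos (\<alpha> * pi / 2) *\<^sub>R (transpose M ** Y ** M)"
    unfolding P
    by (simp add: matrix_add_ldistrib matrix_add_rdistrib matrix_scalar_ac scalar_matrix_assoc)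
  moreover have "pos_def (block_XY (transpose M ** X ** M) (transpose M ** Y ** M))"
    unfolding block_XY_congruence
    using pos_def_congruence[OF pd inj_block_diag[OF assms(2)]] .
  ultimately show ?thesis
    unfolding frac_pd_def by blast
qed

theorem theorem1:
  fixes \<alpha> :: real and P :: "real^'n^'n" and M :: "real^'r^'n"
  assumes "0 < \<alpha>" and "\<alpha> < 1"
    and "CARD('r) \<le> CARD('n)"
    and "P \<in> frac_pd \<alpha>"
    and "rank M = CARD('r)"
  shows "transpose M ** P ** M \<in> frac_pd \<alpha>"
  using frac_pd_congruence[OF assms(4)] full_rank_injective assms(5) by blast

end
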